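(* Consider a clustered gossip network with $m$ clusters of $k$ end-nodes each, as described in the context. Let $F_c$ denote the average binary freshness $\lim_{t\to\infty}\mathbb{E}[F_c(t)]$ of a cluster head, and for a nonempty subset $S$ of the end-nodes of a single cluster let $F_S=\lim_{t\to\infty}\mathbb{E}[\max_{j\in S}F_j(t)]$. Then $$F_S=\frac{\lambda_c(S)F_c+\sum_{i\in N(S)}\lambda_i(S)F_{S\cup\{i\}}}{\lambda_e+\lambda_c(S)+\sum_{i\in N(S)}\lambda_i(S)},\qquad F_c=\frac{\lambda_s}{\lambda_s+m\lambda_e}.$$
   Context: Model: The information at a source is updated (a new version is generated) according to a Poisson process of rate $\lambda_e>0$. There are $n=km$ end-nodes partitioned into $m$ clusters of $k$ nodes each, and each cluster has a cluster head. The source sends its current version to each cluster head according to a Poisson process of rate $\lambda_s/m$; each cluster head sends its stored version to each of the $k$ end-nodes of its own cluster according to a Poisson process of rate $\lambda_c/k$; an end-node $i$ sends its stored version to an end-node $j\ne i$ of the same cluster according to a Poisson process of rate $\lambda_{ij}\ge0$ (there is no gossip between different clusters, and cluster heads receive only from the source). All processes are independent. A node receiving a version keeps the fresher of its stored and received versions. The binary freshness $F_x(t)$ of a node (end-node or cluster head) $x$ is $1$ if it stores the current source version at time $t$ and $0$ otherwise. Notation for a subset $S$ of end-nodes of one cluster: $\lambda_c(S)$ is the total update rate from that cluster's head into $S$ (equal to $|S|\lambda_c/k$); for an end-node $i\notin S$, $\lambda_i(S)=\sum_{j\in S}\lambda_{ij}$; $N(S)=\{i\notin S:\lambda_i(S)>0\}$.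 *)

theory Defs
  imports Complex_Main
begin

text \<open>
Clusters are indexed by c < m, end-nodes of cluster c by
i < k.  The whole network is driven by independent Poisson clocks, one per event type
below; the state records version numbers (source, cluster heads, end-nodes).
\<close>

datatype ev =
    Upd                       \<comment> \<open>new version at the source, rate le\<close>
  | SH nat                    \<comment> \<open>source to head of cluster c, rate ls/m\<close>
  | HN nat nat                \<comment> \<open>head of cluster c to its end-node i, rate lc/k\<close>
  | G nat nat nat             \<comment> \<open>in cluster c, end-node i to end-node j (i ~= j), rate lg c i j\<close>

type_synonym state = "nat \<times> (nat \<Rightarrow> nat) \<times> (nat \<Rightarrow> nat \<Rightarrow> nat)"
  \<comment> \<open>(source version, head versions, end-node versions: node c i)\<close>

definition events :: "nat \<Rightarrow> nat \<Rightarrow> ev set" where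
  "events m k = {Upd} \<union> SH ` {..<m} \<union> {HN c i |c i. c < m \<and> i < k}
      \<union> {G c i j |c i j. c < m \<and> i < k \<and> j < k \<and> i \<noteq> j}"

fun rate :: "real \<Rightarrow> real \<Rightarrow> real \<Rightarrow> (nat \<Rightarrow> nat \<Rightarrow> nat \<Rightarrow> real) \<Rightarrow> nat \<Rightarrow> nat \<Rightarrow> ev \<Rightarrow> real" where
  "rate le ls lc lg m k Upd = le"
| "rate le ls lc lg m k (SH c) = ls / real m"
| "rate le ls lc lg m k (HN c i) = lc / real k"
| "rate le ls lc lg m k (G c i j) = lg c i j"

text \<open>Effect of an event: the receiver keeps the fresher (larger) version.\<close>
fun act :: "ev \<Rightarrow> state \<Rightarrow> state" where
  "act Upd (v, h, x) = (Suc v, h, x)"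
| "act (SH c) (v, h, x) = (v, h(c := max (h c) v), x)"
| "act (HN c i) (v, h, x) = (v, h, x(c := (x c)(i := max (x c i) (h c))))"
| "act (G c i j) (v, h, x) = (v, h, x(c := (x c)(j := max (x c j) (x c i))))"

definition total_rate :: "real \<Rightarrow> real \<Rightarrow> real \<Rightarrow> (nat \<Rightarrow> nat \<Rightarrow> nat \<Rightarrow> real) \<Rightarrow> nat \<Rightarrow> nat \<Rightarrow> real" where
  "total_rate le ls lc lg m k = (\<Sum>e\<in>events m k. rate le ls lc lg m k e)"

text \<open>One-step transition operator of the embedded jump chain (uniformization):
  acting on observables g.\<close>
definition step_op :: "real \<Rightarrow> real \<Rightarrow> real \<Rightarrow> (nat \<Rightarrow> nat \<Rightarrow> nat \<Rightarrow> real) \<Rightarrow> nat \<Rightarrow> nat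
    \<Rightarrow> (state \<Rightarrow> real) \<Rightarrow> state \<Rightarrow> real" where
  "step_op le ls lc lg m k g s =
     (\<Sum>e\<in>events m k. rate le ls lc lg m k e / total_rate le ls lc lg m k * g (act e s))"

definition init_state :: state where "init_state = (0, \<lambda>_. 0, \<lambda>_ _. 0)"

text \<open>Expectation E[g(X(t))] of an observable at time t: superposition of the
  independent Poisson clocks is a Poisson process of total rate L whose event marks
  are i.i.d. with law rate/L, hence
  E[g(X(t))] = sum_n exp(-L t) (L t)^n / n! * (T^n g)(X(0)).\<close>
definition expect_at :: "real \<Rightarrow> real \<Rightarrow> real \<Rightarrow> (nat \<Rightarrow> nat \<Rightarrow> nat \<Rightarrow> real) \<Rightarrow> nat \<Rightarrow> nat
    \<Rightarrow> real \<Rightarrow> (state \<Rightarrow> real) \<Rightarrow> real" where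
  "expect_at le ls lc lg m k t g =
     (let L = total_rate le ls lc lg m k in
      (\<Sum>n. exp (- L * t) * (L * t) ^ n / fact n * ((step_op le ls lc lg m k ^^ n) g) init_state))"

text \<open>Binary freshness of the head of cluster c, and max_{j in S} F_j for end-nodes of cluster c.\<close>
definition head_fresh :: "nat \<Rightarrow> state \<Rightarrow> real" where
  "head_fresh c s = (case s of (v, h, x) \<Rightarrow> if h c = v then 1 else 0)"

definition set_fresh :: "nat \<Rightarrow> nat set \<Rightarrow> state \<Rightarrow> real" where
  "set_fresh c S s = (case s of (v, h, x) \<Rightarrow> if (\<exists>j\<in>S. x c j = v) then 1 else 0)"

definition F_head where
  "F_head le ls lc lg m k c = Lim at_top (\<lambda>t. expect_at le ls lc lg m k t (head_fresh c))"

definition F_set where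
  "F_set le ls lc lg m k c S = Lim at_top (\<lambda>t. expect_at le ls lc lg m k t (set_fresh c S))"

definition lam_in :: "(nat \<Rightarrow> nat \<Rightarrow> nat \<Rightarrow> real) \<Rightarrow> nat \<Rightarrow> nat \<Rightarrow> nat set \<Rightarrow> real" where
  "lam_in lg c i S = (\<Sum>j\<in>S. lg c i j)"

definition nbrs :: "(nat \<Rightarrow> nat \<Rightarrow> nat \<Rightarrow> real) \<Rightarrow> nat \<Rightarrow> nat \<Rightarrow> nat set \<Rightarrow> nat set" where
  "nbrs lg k c S = {i. i < k \<and> i \<notin> S \<and> lam_in lg c i S > 0}"

end

theory Submission
  imports Defs
begin

(*
  The state is explored by uniformization: E[g(X(t))] is a Poisson(L t) mixture of the
  iterates (T^n g)(X(0)) of the jump-chain operator T, and such a mixture converges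
  whenever the iterates do.  One step of the chain acts on the freshness indicator f of a
  cluster head, or of a set S of end-nodes, as T f = (1 - d/L) f + h/L on every state with
  versions ordered source >= head >= end-node: d is the total rate of the events that can
  change f, and h collects what those events lead to (the source, the head, or S plus an
  in-neighbour i).  Hence the iterates of f obey an affine recurrence with contraction factor
  1 - d/L, and converge to lim (T^n h) / d.  For the head h is constant; for S the limits of
  the larger sets S + {i} are available by downward induction on |S|.
*)

lemma LIMSEQ_affine_recurrence:
  fixes a u :: "nat \<Rightarrow> real"
  assumes \<rho>: "0 \<le> \<rho>" "\<rho> < 1" and rec: "\<And>n. a (Suc n) = \<rho> * a n + u n" and u: "u \<longlonglongrightarrow> U"
  shows "a \<longlonglongrightarrow> U / (1 - \<rho>)"
proof -
  define e where "e n = a n - U / (1 - \<rho>)" for n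
  have e_rec: "e (Suc n) = \<rho> * e n + (u n - U)" for n
    unfolding e_def rec using \<rho> by (simp add: field_simps)
  have "e \<longlonglongrightarrow> 0"
  proof (rule LIMSEQ_I)
    fix \<epsilon> :: real assume "\<epsilon> > 0"
    then obtain N where N: "\<And>n. n \<ge> N \<Longrightarrow> \<bar>u n - U\<bar> < \<epsilon> * (1 - \<rho>) / 2"
      using LIMSEQ_D[OF u, of "\<epsilon> * (1 - \<rho>) / 2"] \<rho> by auto
    have bound: "\<bar>e (N + j)\<bar> \<le> \<rho> ^ j * \<bar>e N\<bar> + \<epsilon> / 2" for j
    proof (induction j)
      case 0
      show ?case using \<open>\<epsilon> > 0\<close> by simp
    next
      case (Suc j)
      have "\<bar>e (N + Suc j)\<bar> \<le> \<rho> * \<bar>e (N + j)\<bar> + \<bar>u (N + j) - U\<bar>"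
        using e_rec[of "N + j"] \<rho> by (simp add: abs_mult abs_triangle_ineq[THEN order_trans])
      also have "\<dots> \<le> \<rho> * (\<rho> ^ j * \<bar>e N\<bar> + \<epsilon> / 2) + \<epsilon> * (1 - \<rho>) / 2"
        using Suc \<rho> N[of "N + j"] by (intro add_mono mult_left_mono) auto
      also have "\<dots> = \<rho> ^ Suc j * \<bar>e N\<bar> + \<epsilon> / 2"
        by (simp add: field_simps)
      finally show ?case .
    qed
    have "(\<lambda>j. \<rho> ^ j * \<bar>e N\<bar>) \<longlonglongrightarrow> 0"
      using \<rho> by (intro tendsto_mult_left_zero LIMSEQ_power_zero) auto
    then obtain J where J: "\<And>j. j \<ge> J \<Longrightarrow> \<rho> ^ j * \<bar>e N\<bar> < \<epsilon> / 2"
      using LIMSEQ_D[of _ 0 "\<epsilon> / 2"] \<open>\<epsilon> > 0\<close> \<rho> by fastforce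
    have "\<bar>e n\<bar> < \<epsilon>" if "n \<ge> N + J" for n
    proof -
      have "\<rho> ^ (n - N) * \<bar>e N\<bar> < \<epsilon> / 2"
        using J that by simp
      then show ?thesis
        using bound[of "n - N"] that by simp
    qed
    then show "\<exists>n0. \<forall>n\<ge>n0. norm (e n - 0) < \<epsilon>"
      by auto
  qed
  then have "(\<lambda>n. e n + U / (1 - \<rho>)) \<longlonglongrightarrow> 0 + U / (1 - \<rho>)"
    by (intro tendsto_add tendsto_const)
  then show ?thesis
    by (simp add: e_def)
qed

lemma weighted_suminf_bound:
  fixes w a :: "nat \<Rightarrow> real"
  assumes w: "\<And>n. 0 \<le> w n" "w sums 1"
    and B: "\<And>n. \<bar>a n\<bar> \<le> B" and tail: "\<And>n. n \<ge> N \<Longrightarrow> \<bar>a n\<bar> \<le> \<epsilon>"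
  shows "summable (\<lambda>n. w n * a n)" and "\<bar>\<Sum>n. w n * a n\<bar> \<le> B * (\<Sum>n<N. w n) + \<epsilon>"
proof -
  define g where "g n = (if n < N then B * w n else 0) + \<epsilon> * w n" for n
  have g_sums: "g sums (B * (\<Sum>n<N. w n) + \<epsilon> * 1)"
    unfolding g_def using w(2)
    by (intro sums_add sums_mult) (auto simp: sum_distrib_left intro: sums_If_finite_set[where A = "{..<N}", simplified])
  have "0 \<le> \<epsilon>"
    using tail[of N] by simp
  have le_g: "norm (w n * a n) \<le> g n" for n
  proof -
    have "\<bar>a n\<bar> \<le> (if n < N then B else 0) + \<epsilon>"
      using B[of n] tail[of n] \<open>0 \<le> \<epsilon>\<close> by auto
    then have "w n * \<bar>a n\<bar> \<le> w n * ((if n < N then B else 0) + \<epsilon>)"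
      using w(1) by (rule mult_left_mono)
    then show ?thesis
      using w(1)[of n] by (cases "n < N") (simp_all add: g_def abs_mult algebra_simps)
  qed
  show "summable (\<lambda>n. w n * a n)"
    by (rule summable_comparison_test'[OF sums_summable[OF g_sums] le_g])
  have "\<bar>\<Sum>n. w n * a n\<bar> \<le> (\<Sum>n. g n)"
    using norm_suminf_le[OF le_g sums_summable[OF g_sums]] by simp
  then show "\<bar>\<Sum>n. w n * a n\<bar> \<le> B * (\<Sum>n<N. w n) + \<epsilon>"
    using sums_unique[OF g_sums] by simp
qed

lemma tendsto_weighted_suminf:
  fixes w :: "'a \<Rightarrow> nat \<Rightarrow> real" and a :: "nat \<Rightarrow> real"
  assumes nonneg: "\<forall>\<^sub>F t in F. \<forall>n. 0 \<le> w t n" and sums: "\<And>t. w t sums 1"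
    and vanish: "\<And>n. ((\<lambda>t. w t n) \<longlongrightarrow> 0) F" and a: "a \<longlonglongrightarrow> A"
  shows "((\<lambda>t. \<Sum>n. w t n * a n) \<longlongrightarrow> A) F"
proof -
  define b where "b n = a n - A" for n
  have "b \<longlonglongrightarrow> 0"
    using a unfolding b_def by (rule LIM_zero)
  then obtain B where B: "\<And>n. \<bar>b n\<bar> \<le> B"
    using convergent_imp_Bseq[of b] unfolding Bseq_def convergent_def by fastforce
  have b_lim: "((\<lambda>t. \<Sum>n. w t n * b n) \<longlongrightarrow> 0) F"
  proof (rule tendstoI)
    fix \<epsilon> :: real assume "\<epsilon> > 0"
    then obtain N where N: "\<And>n. n \<ge> N \<Longrightarrow> \<bar>b n\<bar> \<le> \<epsilon> / 2"
      using LIMSEQ_D[OF \<open>b \<longlonglongrightarrow> 0\<close>, of "\<epsilon> / 2"] by (auto intro: less_imp_le)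
    have "((\<lambda>t. B * (\<Sum>n<N. w t n)) \<longlongrightarrow> B * 0) F"
      by (intro tendsto_mult tendsto_const tendsto_null_sum vanish)
    from order_tendstoD(2)[OF this, of "\<epsilon> / 2"]
    have head: "\<forall>\<^sub>F t in F. B * (\<Sum>n<N. w t n) < \<epsilon> / 2"
      using \<open>\<epsilon> > 0\<close> by simp
    show "\<forall>\<^sub>F t in F. dist (\<Sum>n. w t n * b n) 0 < \<epsilon>"
      using head nonneg
    proof eventually_elim
      case (elim t)
      have "\<bar>\<Sum>n. w t n * b n\<bar> \<le> B * (\<Sum>n<N. w t n) + \<epsilon> / 2"
        using elim(2) by (intro weighted_suminf_bound(2)[OF _ sums B N]) auto
      then show ?case
        using elim(1) by simp
    qed
  qed
  have "\<forall>\<^sub>F t in F. (\<Sum>n. w t n * b n) + A = (\<Sum>n. w t n * a n)"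
    using nonneg
  proof eventually_elim
    case (elim t)
    have "summable (\<lambda>n. w t n * b n)"
      using elim by (intro weighted_suminf_bound(1)[OF _ sums B B]) auto
    from sums_add[OF summable_sums[OF this] sums_mult[OF sums[of t], of A]]
    have "(\<lambda>n. w t n * a n) sums ((\<Sum>n. w t n * b n) + A)"
      by (simp add: b_def algebra_simps)
    then show ?case
      by (simp add: sums_iff)
  qed
  moreover have "((\<lambda>t. (\<Sum>n. w t n * b n) + A) \<longlongrightarrow> 0 + A) F"
    by (intro tendsto_add b_lim tendsto_const)
  ultimately show ?thesis
    by (simp add: tendsto_cong)
qed

lemma poisson_weights_sums: "(\<lambda>n. exp (- L * t) * (L * t) ^ n / fact n) sums (1::real)"
proof -
  have "(\<lambda>n. (L * t) ^ n / fact n) sums exp (L * t)"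
    using exp_converges[of "L * t"] by (simp add: divide_inverse_commute scaleR_conv_of_real)
  from sums_mult[OF this, of "exp (- L * t)"] show ?thesis
    by (simp add: exp_minus field_simps)
qed

lemma poisson_weight_tendsto_0:
  assumes "(L::real) > 0"
  shows "((\<lambda>t. exp (- L * t) * (L * t) ^ n / fact n) \<longlongrightarrow> 0) at_top"
proof -
  have "filterlim (\<lambda>t. L * t) at_top at_top"
    using assms by (intro filterlim_tendsto_pos_mult_at_top[OF tendsto_const] filterlim_ident)
  from filterlim_compose[OF tendsto_power_div_exp_0 this]
  have "((\<lambda>t. (L * t) ^ n / exp (L * t) / fact n) \<longlongrightarrow> 0 / fact n) at_top"
    by (intro tendsto_divide) auto
  then show ?thesis
    by (simp add: exp_minus field_simps)
qed

lemma poisson_mixture_tendsto: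
  fixes a :: "nat \<Rightarrow> real"
  assumes "L > 0" and "a \<longlonglongrightarrow> A"
  shows "((\<lambda>t. \<Sum>n. exp (- L * t) * (L * t) ^ n / fact n * a n) \<longlongrightarrow> A) at_top"
proof (rule tendsto_weighted_suminf[OF _ poisson_weights_sums poisson_weight_tendsto_0[OF \<open>L > 0\<close>] \<open>a \<longlonglongrightarrow> A\<close>])
  show "\<forall>\<^sub>F t in at_top. \<forall>n. 0 \<le> exp (- L * t) * (L * t) ^ n / fact n"
    using eventually_ge_at_top[of 0] by eventually_elim (use \<open>L > 0\<close> in simp)
qed

lemma events_eq:
  "events m k = {Upd} \<union> SH ` {..<m} \<union> (\<lambda>(c, i). HN c i) ` ({..<m} \<times> {..<k})
     \<union> (\<lambda>(c, i, j). G c i j) ` (SIGMA c:{..<m}. SIGMA i:{..<k}. {..<k} - {i})"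
proof -
  have "{HN c i |c i. c < m \<and> i < k} = (\<lambda>(c, i). HN c i) ` ({..<m} \<times> {..<k})"
    by auto
  moreover have "{G c i j |c i j. c < m \<and> i < k \<and> j < k \<and> i \<noteq> j}
      = (\<lambda>(c, i, j). G c i j) ` (SIGMA c:{..<m}. SIGMA i:{..<k}. {..<k} - {i})"
    by force
  ultimately show ?thesis
    unfolding events_def by simp
qed

lemma sum_events:
  fixes \<phi> :: "ev \<Rightarrow> real"
  shows "(\<Sum>e\<in>events m k. \<phi> e) = \<phi> Upd + (\<Sum>c<m. \<phi> (SH c)) + (\<Sum>c<m. \<Sum>i<k. \<phi> (HN c i))
     + (\<Sum>c<m. \<Sum>i<k. \<Sum>j\<in>{..<k} - {i}. \<phi> (G c i j))"
proof -
  define HNs where "HNs = (\<lambda>(c, i). HN c i) ` ({..<m} \<times> {..<k})"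
  define Gs where "Gs = (\<lambda>(c, i, j). G c i j) ` (SIGMA c:{..<m}. SIGMA i:{..<k}. {..<k} - {i})"
  have fin: "finite HNs" "finite Gs"
    unfolding HNs_def Gs_def by auto
  have "(\<Sum>e\<in>events m k. \<phi> e) = (\<Sum>e\<in>{Upd} \<union> SH ` {..<m} \<union> HNs. \<phi> e) + (\<Sum>e\<in>Gs. \<phi> e)"
    unfolding events_eq HNs_def[symmetric] Gs_def[symmetric]
    by (rule sum.union_disjoint) (auto simp: fin HNs_def Gs_def)
  also have "(\<Sum>e\<in>{Upd} \<union> SH ` {..<m} \<union> HNs. \<phi> e) = \<phi> Upd + (\<Sum>e\<in>SH ` {..<m}. \<phi> e) + (\<Sum>e\<in>HNs. \<phi> e)"
    by (subst sum.union_disjoint) (auto simp: fin HNs_def image_iff)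
  also have "(\<Sum>e\<in>SH ` {..<m}. \<phi> e) = (\<Sum>c<m. \<phi> (SH c))"
    by (subst sum.reindex) (auto simp: inj_on_def)
  also have "(\<Sum>e\<in>HNs. \<phi> e) = (\<Sum>(c, i)\<in>{..<m} \<times> {..<k}. \<phi> (HN c i))"
    unfolding HNs_def by (subst sum.reindex) (auto simp: inj_on_def case_prod_beta)
  also have "(\<Sum>e\<in>Gs. \<phi> e) = (\<Sum>(c, i, j)\<in>(SIGMA c:{..<m}. SIGMA i:{..<k}. {..<k} - {i}). \<phi> (G c i j))"
    unfolding Gs_def by (subst sum.reindex) (auto simp: inj_on_def case_prod_beta)
  finally show ?thesis
    by (simp add: sum.cartesian_product sum.Sigma)
qed

definition ordered_state :: "state \<Rightarrow> bool" where
  "ordered_state s \<longleftrightarrow> (case s of (v, h, x) \<Rightarrow> \<forall>c j. x c j \<le> h c \<and> h c \<le> v)"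

lemma ordered_state_init_state: "ordered_state init_state"
  by (simp add: ordered_state_def init_state_def)

lemma ordered_state_act: "ordered_state s \<Longrightarrow> ordered_state (act e s)"
  by (cases s; cases e) (auto simp: ordered_state_def le_max_iff_disj le_SucI intro: order_trans)

lemma head_fresh_act:
  assumes "ordered_state s"
  shows "head_fresh c (act Upd s) = 0"
    and "head_fresh c (act (SH c') s) = (if c' = c then 1 else head_fresh c s)"
    and "head_fresh c (act (HN c' i) s) = head_fresh c s"
    and "head_fresh c (act (G c' i j) s) = head_fresh c s"
proof -
  obtain v h x where s: "s = (v, h, x)" and "h c \<le> v"
    using assms by (cases s) (auto simp: ordered_state_def)
  then show "head_fresh c (act Upd s) = 0"
    and "head_fresh c (act (SH c') s) = (if c' = c then 1 else head_fresh c s)"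
    and "head_fresh c (act (HN c' i) s) = head_fresh c s"
    and "head_fresh c (act (G c' i j) s) = head_fresh c s"
    by (auto simp: head_fresh_def max_def)
qed

lemma set_fresh_act:
  assumes "ordered_state s"
  shows "set_fresh c S (act Upd s) = 0"
    and "set_fresh c S (act (SH c') s) = set_fresh c S s"
    and "set_fresh c S (act (HN c' i) s) = (if c' = c \<and> i \<in> S then head_fresh c s else set_fresh c S s)"
    and "set_fresh c S (act (G c' i j) s)
      = (if c' = c \<and> j \<in> S \<and> i \<notin> S then set_fresh c (S \<union> {i}) s else set_fresh c S s)"
proof -
  obtain v h x where s: "s = (v, h, x)" and ord: "\<And>c j. x c j \<le> h c" "\<And>c. h c \<le> v"
    using assms by (cases s) (auto simp: ordered_state_def)
  have below: "x c j' \<le> v" for j'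
    using ord by (meson order_trans)
  have fresh_head: "x c j' = v \<Longrightarrow> h c = v" for j'
    using ord(1)[of c j'] ord(2)[of c] by simp
  have max_fresh: "max (x c j) (x c i) = v \<longleftrightarrow> x c j = v \<or> x c i = v"
    using below[of j] below[of i] by (auto simp: max_def)
  show "set_fresh c S (act Upd s) = 0"
    using s below by (auto simp: set_fresh_def) (metis Suc_n_not_le_n)
  show "set_fresh c S (act (SH c') s) = set_fresh c S s"
    using s by (simp add: set_fresh_def)
  show "set_fresh c S (act (HN c' i) s) = (if c' = c \<and> i \<in> S then head_fresh c s else set_fresh c S s)"
  proof (cases "c' = c \<and> i \<in> S")
    case True
    have "max (x c i) (h c) = h c"
      using ord(1) by (rule max_absorb2)
    then have "(\<exists>j'\<in>S. ((x c)(i := max (x c i) (h c))) j' = v) \<longleftrightarrow> h c = v"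
      using True fresh_head by (auto simp: fun_upd_apply)
    then show ?thesis
      using s True by (auto simp: set_fresh_def head_fresh_def)
  qed (use s in \<open>auto simp: set_fresh_def\<close>)
  show "set_fresh c S (act (G c' i j) s)
      = (if c' = c \<and> j \<in> S \<and> i \<notin> S then set_fresh c (S \<union> {i}) s else set_fresh c S s)"
  proof (cases "c' = c")
    case True
    have "(\<exists>j'\<in>S. ((x c)(j := max (x c j) (x c i))) j' = v)
        \<longleftrightarrow> (\<exists>j'\<in>S. x c j' = v) \<or> (j \<in> S \<and> x c i = v)"
      using max_fresh by (auto simp: fun_upd_apply)
    then show ?thesis
      using s True by (auto simp: set_fresh_def)
  qed (use s in \<open>simp add: set_fresh_def\<close>)
qed

(*
  The head-to-node and gossip parts of the drift of set_fresh, in the shape produced by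
  set_fresh_act: Y is the current value, X and Z i are the values after a refreshing event.
*)
lemma sum_head_to_node_updates:
  fixes a X Y :: real and c m k :: nat
  assumes "c < m" and "S \<subseteq> {..<k}"
  shows "(\<Sum>c'<m. \<Sum>i<k. a * ((if c' = c \<and> i \<in> S then X else Y) - Y)) = real (card S) * a * (X - Y)"
proof -
  have "(\<Sum>c'<m. \<Sum>i<k. a * ((if c' = c \<and> i \<in> S then X else Y) - Y))
      = (\<Sum>i<k. a * ((if i \<in> S then X else Y) - Y))"
    using assms(1) by (subst sum.mono_neutral_cong_right[where S = "{c}" and T = "{..<m}"]) auto
  also have "\<dots> = (\<Sum>i\<in>S. a * (X - Y))"
    using assms(2) by (intro sum.mono_neutral_cong_right) auto
  finally show ?thesis
    by simp
qed

lemma lam_in_nonneg: "(\<And>j. lg c i j \<ge> 0) \<Longrightarrow> lam_in lg c i S \<ge> 0"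
  unfolding lam_in_def by (rule sum_nonneg)

lemma sum_gossip_updates:
  fixes Y :: real and Z :: "nat \<Rightarrow> real" and m :: nat
  assumes "c < m" and "S \<subseteq> {..<k}" and "\<And>i j. lg c i j \<ge> 0"
  shows "(\<Sum>c'<m. \<Sum>i<k. \<Sum>j\<in>{..<k} - {i}. lg c' i j * ((if c' = c \<and> j \<in> S \<and> i \<notin> S then Z i else Y) - Y))
      = (\<Sum>i\<in>nbrs lg k c S. lam_in lg c i S * (Z i - Y))"
proof -
  have inner: "(\<Sum>j\<in>{..<k} - {i}. lg c i j * ((if j \<in> S \<and> i \<notin> S then Z i else Y) - Y))
      = (if i \<notin> S then lam_in lg c i S * (Z i - Y) else 0)" for i
  proof (cases "i \<in> S")
    case False
    have "(\<Sum>j\<in>{..<k} - {i}. lg c i j * ((if j \<in> S then Z i else Y) - Y))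
        = (\<Sum>j\<in>S. lg c i j * (Z i - Y))"
      using assms(2) False by (intro sum.mono_neutral_cong_right) auto
    then show ?thesis
      using False by (simp add: lam_in_def sum_distrib_right)
  qed simp
  have "(\<Sum>c'<m. \<Sum>i<k. \<Sum>j\<in>{..<k} - {i}. lg c' i j * ((if c' = c \<and> j \<in> S \<and> i \<notin> S then Z i else Y) - Y))
      = (\<Sum>i<k. \<Sum>j\<in>{..<k} - {i}. lg c i j * ((if j \<in> S \<and> i \<notin> S then Z i else Y) - Y))"
    using assms(1) by (subst sum.mono_neutral_cong_right[where S = "{c}" and T = "{..<m}"]) auto
  also have "\<dots> = (\<Sum>i<k. if i \<notin> S then lam_in lg c i S * (Z i - Y) else 0)"
    by (intro sum.cong refl inner)
  also have "\<dots> = (\<Sum>i\<in>nbrs lg k c S. lam_in lg c i S * (Z i - Y))"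
  proof (rule sum.mono_neutral_cong_right)
    have "lam_in lg c i S = 0" if "i \<notin> nbrs lg k c S" "i < k" "i \<notin> S" for i
      using that lam_in_nonneg[of lg c i S] assms(3) unfolding nbrs_def by force
    then show "\<forall>i\<in>{..<k} - nbrs lg k c S. (if i \<notin> S then lam_in lg c i S * (Z i - Y) else 0) = 0"
      by auto
  qed (auto simp: nbrs_def)
  finally show ?thesis .
qed

locale gossip_network =
  fixes le ls lc :: real and lg :: "nat \<Rightarrow> nat \<Rightarrow> nat \<Rightarrow> real" and m k :: nat
  assumes le_pos: "le > 0" and ls_pos: "ls > 0" and lc_pos: "lc > 0"
    and lg_nonneg: "\<And>c i j. lg c i j \<ge> 0"
    and m_pos: "m > 0" and k_pos: "k > 0"
begin

abbreviation "L \<equiv> total_rate le ls lc lg m k"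
abbreviation "T \<equiv> step_op le ls lc lg m k"
abbreviation "r \<equiv> rate le ls lc lg m k"

lemma total_rate_eq: "L = le + ls + real m * lc + (\<Sum>c<m. \<Sum>i<k. \<Sum>j\<in>{..<k} - {i}. lg c i j)"
  unfolding total_rate_def sum_events using m_pos k_pos by simp

lemma gossip_total_nonneg: "0 \<le> (\<Sum>c<m. \<Sum>i<k. \<Sum>j\<in>{..<k} - {i}. lg c i j)"
  by (intro sum_nonneg lg_nonneg)

lemma total_rate_pos: "L > 0"
proof -
  have "0 \<le> real m * lc"
    using lc_pos by simp
  then show ?thesis
    using total_rate_eq gossip_total_nonneg le_pos ls_pos by linarith
qed

lemma step_op_eq_drift: "T g s = g s + (\<Sum>e\<in>events m k. r e * (g (act e s) - g s)) / L"
proof -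
  have "(\<Sum>e\<in>events m k. r e * (g (act e s) - g s)) = (\<Sum>e\<in>events m k. r e * g (act e s)) - L * g s"
    unfolding total_rate_def by (simp add: algebra_simps sum_subtractf sum_distrib_left)
  then show ?thesis
    using total_rate_pos by (simp add: step_op_def sum_divide_distrib[symmetric] field_simps)
qed

lemma step_op_add: "T (\<lambda>s. f s + g s) = (\<lambda>s. T f s + T g s)"
  by (simp add: step_op_def distrib_left sum.distrib fun_eq_iff)

lemma step_op_scale: "T (\<lambda>s. a * f s) = (\<lambda>s. a * T f s)"
  by (simp add: step_op_def sum_distrib_left mult_ac fun_eq_iff)

lemma step_op_sum: "T (\<lambda>s. \<Sum>i\<in>I. f i s) = (\<lambda>s. \<Sum>i\<in>I. T (f i) s)"
  by (simp add: step_op_def sum_distrib_left fun_eq_iff sum.swap[of _ I])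

lemma step_op_const: "T (\<lambda>_. a) = (\<lambda>_. a)"
  using total_rate_pos
  by (simp add: step_op_def fun_eq_iff sum_distrib_right[symmetric] sum_divide_distrib[symmetric]
      total_rate_def[symmetric])

lemma funpow_step_op_add: "(T ^^ n) (\<lambda>s. f s + g s) = (\<lambda>s. (T ^^ n) f s + (T ^^ n) g s)"
  by (induction n) (simp_all add: step_op_add)

lemma funpow_step_op_scale: "(T ^^ n) (\<lambda>s. a * f s) = (\<lambda>s. a * (T ^^ n) f s)"
  by (induction n) (simp_all add: step_op_scale)

lemma funpow_step_op_sum: "(T ^^ n) (\<lambda>s. \<Sum>i\<in>I. f i s) = (\<lambda>s. \<Sum>i\<in>I. (T ^^ n) (f i) s)"
  by (induction n) (simp_all add: step_op_sum)

lemma funpow_step_op_const: "(T ^^ n) (\<lambda>_. a) = (\<lambda>_. a)"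
  by (induction n) (simp_all add: step_op_const)

lemma funpow_step_op_cong:
  assumes "\<And>s. ordered_state s \<Longrightarrow> f s = g s" and "ordered_state s"
  shows "(T ^^ n) f s = (T ^^ n) g s"
  using assms(2)
proof (induction n arbitrary: s)
  case 0
  then show ?case
    using assms(1) by simp
next
  case (Suc n)
  then show ?case
    by (simp add: step_op_def ordered_state_act)
qed

lemma iterates_tendsto_of_step:
  assumes step: "\<And>s. ordered_state s \<Longrightarrow> T f s = (1 - d / L) * f s + h s / L"
    and d: "0 < d" "d \<le> L" and h: "(\<lambda>n. (T ^^ n) h init_state) \<longlonglongrightarrow> H"
  shows "(\<lambda>n. (T ^^ n) f init_state) \<longlonglongrightarrow> H / d"
proof -
  have "(T ^^ Suc n) f init_state = (1 - d / L) * (T ^^ n) f init_state + 1 / L * (T ^^ n) h init_state" for n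
  proof -
    have "(T ^^ Suc n) f init_state = (T ^^ n) (T f) init_state"
      by (simp only: funpow_Suc_right o_apply)
    also have "\<dots> = (T ^^ n) (\<lambda>s. (1 - d / L) * f s + 1 / L * h s) init_state"
      using step by (intro funpow_step_op_cong) (simp_all add: ordered_state_init_state)
    finally show ?thesis
      by (simp only: funpow_step_op_add funpow_step_op_scale)
  qed
  moreover have "(\<lambda>n. 1 / L * (T ^^ n) h init_state) \<longlonglongrightarrow> 1 / L * H"
    using h by (rule tendsto_mult_left)
  ultimately have "(\<lambda>n. (T ^^ n) f init_state) \<longlonglongrightarrow> 1 / L * H / (1 - (1 - d / L))"
    using d total_rate_pos by (intro LIMSEQ_affine_recurrence) auto
  then show ?thesis
    using d total_rate_pos by simp
qed

lemma expect_at_tendsto: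
  assumes "(\<lambda>n. (T ^^ n) g init_state) \<longlonglongrightarrow> X"
  shows "((\<lambda>t. expect_at le ls lc lg m k t g) \<longlongrightarrow> X) at_top"
  unfolding expect_at_def Let_def by (rule poisson_mixture_tendsto[OF total_rate_pos assms])

lemma head_fresh_step:
  assumes "c < m" and "ordered_state s"
  shows "T (head_fresh c) s = (1 - (le + ls / m) / L) * head_fresh c s + ls / m / L"
proof -
  have "(\<Sum>c'<m. ls / m * ((if c' = c then 1 else head_fresh c s) - head_fresh c s))
      = ls / m * (1 - head_fresh c s)"
    using assms(1) by (subst sum.mono_neutral_cong_right[where S = "{c}" and T = "{..<m}"]) auto
  then have drift: "(\<Sum>e\<in>events m k. r e * (head_fresh c (act e s) - head_fresh c s))
      = le * (0 - head_fresh c s) + ls / m * (1 - head_fresh c s)"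
    unfolding sum_events head_fresh_act[OF assms(2)] by simp
  show ?thesis
    unfolding step_op_eq_drift drift using total_rate_pos m_pos by (simp add: field_simps)
qed

lemma head_fresh_iterates_tendsto:
  assumes "c < m"
  shows "(\<lambda>n. (T ^^ n) (head_fresh c) init_state) \<longlonglongrightarrow> ls / (ls + real m * le)"
proof -
  have rate_le: "le + ls / m \<le> L"
  proof -
    have "ls / m \<le> ls"
      using m_pos ls_pos by (simp add: divide_le_eq)
    moreover have "0 \<le> real m * lc"
      using lc_pos by simp
    ultimately show ?thesis
      using total_rate_eq gossip_total_nonneg by linarith
  qed
  have "(\<lambda>n. (T ^^ n) (head_fresh c) init_state) \<longlonglongrightarrow> ls / m / (le + ls / m)"
  proof (rule iterates_tendsto_of_step[where h = "\<lambda>_. ls / m"])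
    show "T (head_fresh c) s = (1 - (le + ls / m) / L) * head_fresh c s + ls / m / L"
      if "ordered_state s" for s
      using head_fresh_step[OF assms that] .
    show "0 < le + ls / m"
      using le_pos ls_pos by (simp add: add_pos_nonneg)
  qed (simp_all add: funpow_step_op_const rate_le)
  also have "ls / m / (le + ls / m) = ls / (ls + real m * le)"
    using m_pos by (simp add: field_simps)
  finally show ?thesis .
qed

lemma F_head_eq:
  assumes "c < m"
  shows "F_head le ls lc lg m k c = ls / (ls + real m * le)"
  unfolding F_head_def
  by (rule tendsto_Lim[OF trivial_limit_at_top_linorder expect_at_tendsto[OF head_fresh_iterates_tendsto[OF assms]]])

definition set_event_rate :: "nat \<Rightarrow> nat set \<Rightarrow> real" where
  "set_event_rate c S = le + real (card S) * lc / real k + (\<Sum>i\<in>nbrs lg k c S. lam_in lg c i S)"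

lemma set_event_rate_pos: "set_event_rate c S > 0"
  unfolding set_event_rate_def using le_pos lc_pos lam_in_nonneg[OF lg_nonneg]
  by (intro add_pos_nonneg sum_nonneg) auto

lemma set_event_rate_le_total_rate:
  assumes "c < m" and "S \<subseteq> {..<k}"
  shows "set_event_rate c S \<le> L"
proof -
  \<comment> \<open>The update sums with X = Z = 1 and Y = 0 exhibit both rates as parts of L.\<close>
  have "real (card S) * (lc / k) * (1 - 0) \<le> (\<Sum>c'<m. \<Sum>i<k. lc / k * 1)"
    unfolding sum_head_to_node_updates[OF assms, symmetric]
    using lc_pos by (intro sum_mono) auto
  moreover have "(\<Sum>i\<in>nbrs lg k c S. lam_in lg c i S * (1 - 0))
      \<le> (\<Sum>c'<m. \<Sum>i<k. \<Sum>j\<in>{..<k} - {i}. lg c' i j * 1)"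
    unfolding sum_gossip_updates[OF assms lg_nonneg, symmetric]
    using lg_nonneg by (intro sum_mono mult_left_mono) auto
  ultimately show ?thesis
    unfolding set_event_rate_def total_rate_eq using ls_pos m_pos k_pos by simp
qed

lemma set_fresh_step:
  assumes "c < m" and "S \<subseteq> {..<k}" and "ordered_state s"
  shows "T (set_fresh c S) s = (1 - set_event_rate c S / L) * set_fresh c S s
     + (real (card S) * lc / real k * head_fresh c s
        + (\<Sum>i\<in>nbrs lg k c S. lam_in lg c i S * set_fresh c (S \<union> {i}) s)) / L"
proof -
  have "(\<Sum>e\<in>events m k. r e * (set_fresh c S (act e s) - set_fresh c S s))
      = le * (0 - set_fresh c S s) + real (card S) * (lc / real k) * (head_fresh c s - set_fresh c S s)
        + (\<Sum>i\<in>nbrs lg k c S. lam_in lg c i S * (set_fresh c (S \<union> {i}) s - set_fresh c S s))"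
    unfolding sum_events set_fresh_act[OF assms(3)] rate.simps
      sum_head_to_node_updates[OF assms(1,2)] sum_gossip_updates[OF assms(1,2) lg_nonneg]
    by simp
  also have "\<dots> = real (card S) * lc / real k * head_fresh c s
        + (\<Sum>i\<in>nbrs lg k c S. lam_in lg c i S * set_fresh c (S \<union> {i}) s)
        - set_event_rate c S * set_fresh c S s"
    unfolding set_event_rate_def
    by (simp add: algebra_simps sum_subtractf sum_distrib_left diff_divide_distrib)
  finally have drift: "(\<Sum>e\<in>events m k. r e * (set_fresh c S (act e s) - set_fresh c S s))
      = real (card S) * lc / real k * head_fresh c s
        + (\<Sum>i\<in>nbrs lg k c S. lam_in lg c i S * set_fresh c (S \<union> {i}) s)
        - set_event_rate c S * set_fresh c S s" .
  show ?thesis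
    unfolding step_op_eq_drift drift using total_rate_pos by (simp add: field_simps)
qed

lemma set_fresh_limit:
  assumes "c < m"
  shows "S \<subseteq> {..<k} \<Longrightarrow> (\<lambda>n. (T ^^ n) (set_fresh c S) init_state) \<longlonglongrightarrow> F_set le ls lc lg m k c S
    \<and> F_set le ls lc lg m k c S =
        (real (card S) * lc / real k * F_head le ls lc lg m k c
          + (\<Sum>i\<in>nbrs lg k c S. lam_in lg c i S * F_set le ls lc lg m k c (S \<union> {i})))
        / set_event_rate c S"
proof (induction "card ({..<k} - S)" arbitrary: S rule: less_induct)
  case (less S)
  have nbr_lim: "(\<lambda>n. (T ^^ n) (set_fresh c (S \<union> {i})) init_state) \<longlonglongrightarrow> F_set le ls lc lg m k c (S \<union> {i})"
    if "i \<in> nbrs lg k c S" for i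
  proof -
    have "{..<k} - (S \<union> {i}) \<subset> {..<k} - S"
      using that unfolding nbrs_def by auto
    then have "card ({..<k} - (S \<union> {i})) < card ({..<k} - S)"
      by (intro psubset_card_mono) auto
    moreover have "S \<union> {i} \<subseteq> {..<k}"
      using that less.prems unfolding nbrs_def by auto
    ultimately show ?thesis
      using less.hyps by blast
  qed
  define F_in where "F_in = real (card S) * lc / real k * F_head le ls lc lg m k c
      + (\<Sum>i\<in>nbrs lg k c S. lam_in lg c i S * F_set le ls lc lg m k c (S \<union> {i}))"
  have "(\<lambda>n. (T ^^ n) (set_fresh c S) init_state) \<longlonglongrightarrow> F_in / set_event_rate c S"
  proof (rule iterates_tendsto_of_step[OF set_fresh_step[OF assms less.prems]])
    show "(\<lambda>n. (T ^^ n) (\<lambda>s. real (card S) * lc / real k * head_fresh c s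
        + (\<Sum>i\<in>nbrs lg k c S. lam_in lg c i S * set_fresh c (S \<union> {i}) s)) init_state) \<longlonglongrightarrow> F_in"
      unfolding F_in_def F_head_eq[OF assms] funpow_step_op_add funpow_step_op_scale funpow_step_op_sum
      by (intro tendsto_add tendsto_mult_left tendsto_sum head_fresh_iterates_tendsto[OF assms] nbr_lim)
  qed (use set_event_rate_pos set_event_rate_le_total_rate[OF assms less.prems] in auto)
  moreover from this have "F_set le ls lc lg m k c S = F_in / set_event_rate c S"
    unfolding F_set_def by (rule tendsto_Lim[OF trivial_limit_at_top_linorder expect_at_tendsto])
  ultimately show ?case
    unfolding F_in_def by simp
qed

end

theorem theorem5:
  fixes le ls lc :: real and lg :: "nat \<Rightarrow> nat \<Rightarrow> nat \<Rightarrow> real" and m k c :: nat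
  assumes "le > 0" and "ls > 0" and "lc > 0"
    and "\<And>c' i j. lg c' i j \<ge> 0"
    and "m > 0" and "k > 0" and "c < m"
  shows "((\<lambda>t. expect_at le ls lc lg m k t (head_fresh c)) \<longlongrightarrow> F_head le ls lc lg m k c) at_top
     \<and> F_head le ls lc lg m k c = ls / (ls + real m * le)
     \<and> (\<forall>S. S \<noteq> {} \<and> S \<subseteq> {..<k} \<longrightarrow>
          ((\<lambda>t. expect_at le ls lc lg m k t (set_fresh c S)) \<longlongrightarrow> F_set le ls lc lg m k c S) at_top
        \<and> F_set le ls lc lg m k c S =
            (real (card S) * lc / real k * F_head le ls lc lg m k c
               + (\<Sum>i\<in>nbrs lg k c S. lam_in lg c i S * F_set le ls lc lg m k c (S \<union> {i})))
            / (le + real (card S) * lc / real k + (\<Sum>i\<in>nbrs lg k c S. lam_in lg c i S)))"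
proof -
  interpret gossip_network le ls lc lg m k
    using assms by unfold_locales auto
  have "((\<lambda>t. expect_at le ls lc lg m k t (head_fresh c)) \<longlongrightarrow> F_head le ls lc lg m k c) at_top"
    unfolding F_head_eq[OF \<open>c < m\<close>]
    by (rule expect_at_tendsto[OF head_fresh_iterates_tendsto[OF \<open>c < m\<close>]])
  then show ?thesis
    using F_head_eq[OF \<open>c < m\<close>] set_fresh_limit[OF \<open>c < m\<close>] expect_at_tendsto
    unfolding set_event_rate_def by blast
qed

end
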